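(* Let $\mathbf{x}=(\mathbf{x}_1,\dots,\mathbf{x}_n)\in\mathbb{R}^{3n}$ be a ligand pose whose atom positions are not all collinear, and let $\boldsymbol{\theta}=(\theta_1,\dots,\theta_m)$ be fixed. For $t\in\mathbb{R}$ put $t\boldsymbol{\theta}=(t\theta_1,\dots,t\theta_m)$ and $\mathbf{x}(t):=A_{\mathrm{tor}}(t\boldsymbol{\theta},\mathbf{x})$, and assume $\mathbf{x}(0)=\mathbf{x}$ and that $t\mapsto\mathbf{x}(t)$ is differentiable at $t=0$ (with the aligning rotation and translation differentiable in $t$ at $t=0$). Then the linear and angular momentum of the motion vanish at $t=0$: $$\frac{d}{dt}\bar{\mathbf{x}}(t)\Big|_{t=0}=0\qquad\text{and}\qquad \sum_{i=1}^n(\mathbf{x}_i-\bar{\mathbf{x}})\times\frac{d}{dt}\mathbf{x}_i(t)\Big|_{t=0}=0,$$ where $\bar{\mathbf{x}}(t)=\frac1n\sum_i\mathbf{x}_i(t)$ and $\bar{\mathbf{x}}=\bar{\mathbf{x}}(0)$.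
   Context: A ligand pose is $\mathbf{x}\in\mathbb{R}^{3n}$, with $\mathbf{x}_i\in\mathbb{R}^3$ the position of atom $i$. $\mathrm{RMSD}(\mathbf{x},\mathbf{x}')=\big(\frac1n\sum_i\|\mathbf{x}_i-\mathbf{x}'_i\|^2\big)^{1/2}$. For $g\in SE(3)$ (proper rigid motion) $g\mathbf{x}'$ applies $g$ to every atom. Define $\mathrm{RMSDAlign}(\mathbf{x},\mathbf{x}')=\operatorname{argmin}_{\mathbf{x}^\dagger\in\{g\mathbf{x}'\mid g\in SE(3)\}}\mathrm{RMSD}(\mathbf{x},\mathbf{x}^\dagger)$. The ligand has $m$ rotatable bonds $(a_k,b_k)$; for each $k$ and angle $\theta$, $B_{k,\theta}:\mathbb{R}^{3n}\to\mathbb{R}^{3n}$ is a torsion update by $\theta$ around bond $k$ (rotation of the atoms on one side of the bond about the bond axis by $\theta$), with $B_{k,0}$ the identity and $B_{k,\theta}$ smooth in $\theta$. The torsion operation is $A_{\mathrm{tor}}(\boldsymbol{\theta},\mathbf{x})=\mathrm{RMSDAlign}\big(\mathbf{x},(B_{1,\theta_1}\circ\cdots\circ B_{m,\theta_m})(\mathbf{x})\big)$ for $\boldsymbol{\theta}\in SO(2)^m$. *)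

theory Defs
  imports "HOL-Analysis.Analysis"
begin

text \<open>A pose of a ligand with atoms indexed by the finite type 'n (so n = CARD('n))
  is a map from atoms to positions in R^3.\<close>

type_synonym 'n pose = "'n \<Rightarrow> real^3"

definition RMSD :: "('n::finite) pose \<Rightarrow> 'n pose \<Rightarrow> real" where
  "RMSD x x' = sqrt ((1 / real CARD('n)) * (\<Sum>i\<in>UNIV. (norm (x i - x' i))\<^sup>2))"

definition rigid_apply :: "real^3^3 \<Rightarrow> real^3 \<Rightarrow> ('n::finite) pose \<Rightarrow> 'n pose" where
  "rigid_apply R p x = (\<lambda>i. R *v x i + p)"

definition SE3_orbit :: "('n::finite) pose \<Rightarrow> 'n pose set" where
  "SE3_orbit x' = {rigid_apply R p x' | R p. rotation_matrix R}"

definition RMSDAlign :: "('n::finite) pose \<Rightarrow> 'n pose \<Rightarrow> 'n pose" where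
  "RMSDAlign x x' = (SOME y. y \<in> SE3_orbit x' \<and> (\<forall>z\<in>SE3_orbit x'. RMSD x y \<le> RMSD x z))"

text \<open>Rotation of the point v by angle th about the line through c with direction d
  (Rodrigues' formula, with unit axis u = d / |d|).\<close>
definition axis_rot :: "real^3 \<Rightarrow> real^3 \<Rightarrow> real \<Rightarrow> real^3 \<Rightarrow> real^3" where
  "axis_rot c d th v =
     (let u = (1 / norm d) *\<^sub>R d; w = v - c in
      c + (cos th *\<^sub>R w + sin th *\<^sub>R (cross3 u w) + ((1 - cos th) * (u \<bullet> w)) *\<^sub>R u))"

text \<open>A rotatable bond is given as (a, b, S): bond atoms a, b and the set S of atoms on
  the side that is rotated. B_{k,th}: rotate the atoms of S about the bond axis x_a -> x_b.\<close>
definition torsion_update :: "('n \<times> 'n \<times> 'n set) \<Rightarrow> real \<Rightarrow> ('n::finite) pose \<Rightarrow> 'n pose" where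
  "torsion_update bd th x =
     (case bd of (a, b, S) \<Rightarrow>
        (\<lambda>i. if i \<in> S then axis_rot (x b) (x b - x a) th (x i) else x i))"

text \<open>B_{1,th_1} o ... o B_{m,th_m}, bonds given as a list of length m, angles indexed 0..m-1.\<close>
definition torsion_comp :: "('n \<times> 'n \<times> 'n set) list \<Rightarrow> (nat \<Rightarrow> real) \<Rightarrow> ('n::finite) pose \<Rightarrow> 'n pose" where
  "torsion_comp bonds th =
     foldr (\<lambda>k f. torsion_update (bonds ! k) (th k) \<circ> f) [0..<length bonds] id"

definition A_tor :: "('n \<times> 'n \<times> 'n set) list \<Rightarrow> (nat \<Rightarrow> real) \<Rightarrow> ('n::finite) pose \<Rightarrow> 'n pose" where
  "A_tor bonds th x = RMSDAlign x (torsion_comp bonds th x)"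

definition centroid :: "('n::finite) pose \<Rightarrow> real^3" where
  "centroid x = (1 / real CARD('n)) *\<^sub>R (\<Sum>i\<in>UNIV. x i)"

end

theory Submission imports Defs begin

text \<open>An optimal alignment is in particular optimal among its own rigid motions, so for every
  t the aligned pose x(t) satisfies the first-order conditions of the alignment problem: it has
  the same centroid as x (translations), and the sum over i of x_i(t) \<times> x_i vanishes
  (rotations; differentiate the squared deviation along the rotations about the three coordinate
  axes). These are exact conservation laws in t. Differentiating them at t = 0 gives zero linear
  momentum, and zero angular momentum about the centroid, because with D_i = x_i'(0) and
  \<Sum> D_i = 0 we have \<Sum> (x_i - c) \<times> D_i = - \<Sum> D_i \<times> x_i.
  No uniqueness or regularity of the alignment is needed.\<close>

definition sum_sq_dist :: "('n::finite) pose \<Rightarrow> 'n pose \<Rightarrow> real" where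
  "sum_sq_dist x y = (\<Sum>i\<in>UNIV. (norm (x i - y i))\<^sup>2)"

lemma RMSD_le_iff: "RMSD x y \<le> RMSD x z \<longleftrightarrow> sum_sq_dist x y \<le> sum_sq_dist x z"
  unfolding RMSD_def sum_sq_dist_def by (simp add: real_sqrt_le_iff divide_le_cancel)

lemma sum_power2_norm_diff_centroid:
  fixes a :: "('n::finite) pose"
  shows "(\<Sum>i\<in>UNIV. (norm (a i - q))\<^sup>2) =
         (\<Sum>i\<in>UNIV. (norm (a i - centroid a))\<^sup>2) + real CARD('n) * (norm (centroid a - q))\<^sup>2"
proof -
  define m where "m = centroid a"
  have "(\<Sum>i\<in>UNIV. a i - m) = 0"
    unfolding m_def centroid_def sum_subtractf sum_constant_scaleR by simp
  then have cross_term: "(\<Sum>i\<in>UNIV. (a i - m) \<bullet> (m - q)) = 0"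
    by (simp add: inner_sum_left[symmetric])
  have expand: "(norm (a i - q))\<^sup>2 =
      (norm (a i - m))\<^sup>2 + 2 * ((a i - m) \<bullet> (m - q)) + (norm (m - q))\<^sup>2" for i
    using dot_norm[of "a i - m" "m - q"] by (simp add: field_simps)
  show ?thesis
    unfolding m_def[symmetric] expand sum.distrib
    using cross_term by (simp add: sum_distrib_left[symmetric])
qed

lemma continuous_on_det: "continuous_on S (det :: real^'n^'n \<Rightarrow> real)"
  unfolding det_def by (intro continuous_intros)

lemma norm_orthogonal_matrix:
  assumes "orthogonal_matrix (Q::real^'n^'n)"
  shows "(norm Q)\<^sup>2 = real CARD('n)"
proof -
  have "Q ** transpose Q = mat 1" using assms by (simp add: orthogonal_matrix_def)
  then have "\<And>i. Q$i \<bullet> Q$i = 1"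
    by (auto simp: vec_eq_iff matrix_matrix_mult_def transpose_def mat_def inner_vec_def)
  then show ?thesis by (simp add: power2_norm_eq_inner inner_vec_def[of Q Q])
qed

lemma closed_orthogonal_matrices: "closed {Q::real^'n^'n. orthogonal_matrix Q}"
proof -
  have "{Q::real^'n^'n. orthogonal_matrix Q} =
     {Q. \<forall>i j. (\<Sum>k\<in>UNIV. Q$k$i * Q$k$j) = (if i = j then 1 else 0)} \<inter>
     {Q. \<forall>i j. (\<Sum>k\<in>UNIV. Q$i$k * Q$j$k) = (if i = j then 1 else 0)}"
    unfolding orthogonal_matrix_def vec_eq_iff matrix_matrix_mult_def transpose_def mat_def
    by auto
  also have "closed \<dots>"
    by (intro closed_Int closed_Collect_all closed_Collect_eq continuous_intros)
  finally show ?thesis .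
qed

lemma compact_rotation_matrices: "compact {Q::real^'n^'n. rotation_matrix Q}"
proof (rule compact_eq_bounded_closed[THEN iffD2], rule conjI)
  show "bounded {Q::real^'n^'n. rotation_matrix Q}"
    unfolding bounded_iff rotation_matrix_def
    using norm_orthogonal_matrix real_sqrt_abs[of "norm _"]
    by (metis (mono_tags, lifting) abs_norm_cancel mem_Collect_eq order_refl)
  have "{Q::real^'n^'n. rotation_matrix Q} = {Q. orthogonal_matrix Q} \<inter> {Q. det Q = 1}"
    by (auto simp: rotation_matrix_def)
  also have "closed \<dots>"
    by (intro closed_Int closed_orthogonal_matrices closed_Collect_eq continuous_on_det
        continuous_on_const)
  finally show "closed {Q::real^'n^'n. rotation_matrix Q}" .
qed

lemma rotation_matrix_id: "rotation_matrix (mat 1 :: real^'n^'n)"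
  by (simp add: rotation_matrix_def orthogonal_matrix_id)

lemma rotation_matrix_mul:
  "rotation_matrix (A::real^'n^'n) \<Longrightarrow> rotation_matrix B \<Longrightarrow> rotation_matrix (A ** B)"
  by (simp add: rotation_matrix_def orthogonal_matrix_mul det_mul)

lemma rigid_apply_in_SE3_orbit:
  assumes "z \<in> SE3_orbit y" "rotation_matrix Q"
  shows "rigid_apply Q q z \<in> SE3_orbit y"
proof -
  obtain R p where z: "z = rigid_apply R p y" "rotation_matrix R"
    using assms(1) unfolding SE3_orbit_def by blast
  have "rigid_apply Q q z = rigid_apply (Q ** R) (Q *v p + q) y"
    unfolding z rigid_apply_def
    by (simp add: fun_eq_iff matrix_vector_mul_assoc matrix_vector_right_distrib add_ac)
  then show ?thesis using rotation_matrix_mul[OF assms(2) z(2)] unfolding SE3_orbit_def by blast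
qed

text \<open>For a fixed rotation the best translation moves the centroid onto that of x, so the
  minimisation reduces to one over the compact set of rotations.\<close>

lemma RMSD_minimizer_exists:
  fixes x y :: "('n::finite) pose"
  shows "\<exists>z. z \<in> SE3_orbit y \<and> (\<forall>w\<in>SE3_orbit y. RMSD x z \<le> RMSD x w)"
proof -
  define a where "a Q i = x i - Q *v y i" for Q :: "real^3^3" and i
  define G where "G Q = (\<Sum>i\<in>UNIV. (norm (a Q i - centroid (a Q)))\<^sup>2)" for Q
  have "continuous_on {Q. rotation_matrix Q} G"
    unfolding G_def centroid_def a_def matrix_vector_mult_def by (intro continuous_intros)
  then obtain Q0 where Q0: "rotation_matrix Q0" "\<And>Q. rotation_matrix Q \<Longrightarrow> G Q0 \<le> G Q"
    using continuous_attains_inf[OF compact_rotation_matrices, of G] rotation_matrix_id by blast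
  have sum_sq_dist_rigid: "sum_sq_dist x (rigid_apply Q p y) = (\<Sum>i\<in>UNIV. (norm (a Q i - p))\<^sup>2)"
    for Q p
    unfolding sum_sq_dist_def rigid_apply_def a_def by (simp add: algebra_simps)
  define z where "z = rigid_apply Q0 (centroid (a Q0)) y"
  have "RMSD x z \<le> RMSD x w" if w_orbit: "w \<in> SE3_orbit y" for w
  proof -
    obtain Q p where w: "w = rigid_apply Q p y" "rotation_matrix Q"
      using w_orbit unfolding SE3_orbit_def by blast
    have "sum_sq_dist x z = G Q0" unfolding z_def sum_sq_dist_rigid G_def ..
    also have "\<dots> \<le> G Q" using Q0 w by blast
    also have "\<dots> \<le> sum_sq_dist x w"
      unfolding w sum_sq_dist_rigid G_def sum_power2_norm_diff_centroid[of "a Q" p] by simp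
    finally show ?thesis by (simp add: RMSD_le_iff)
  qed
  moreover have "z \<in> SE3_orbit y" using Q0 unfolding z_def SE3_orbit_def by blast
  ultimately show ?thesis by blast
qed

lemma RMSDAlign_optimal:
  "RMSDAlign x y \<in> SE3_orbit y \<and> (\<forall>w\<in>SE3_orbit y. RMSD x (RMSDAlign x y) \<le> RMSD x w)"
  unfolding RMSDAlign_def by (rule someI_ex[OF RMSD_minimizer_exists])

lemma RMSDAlign_le_rigid_apply:
  assumes "rotation_matrix Q"
  shows "sum_sq_dist x (RMSDAlign x y) \<le> sum_sq_dist x (rigid_apply Q q (RMSDAlign x y))"
proof -
  note opt = RMSDAlign_optimal[of x y]
  have "rigid_apply Q q (RMSDAlign x y) \<in> SE3_orbit y"
    using opt assms by (simp add: rigid_apply_in_SE3_orbit)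
  then show ?thesis
    using opt by (simp add: RMSD_le_iff)
qed

lemma sum_eq_of_translation_optimal:
  fixes x z :: "('n::finite) pose"
  assumes "\<And>q. sum_sq_dist x z \<le> sum_sq_dist x (\<lambda>i. z i + q)"
  shows "(\<Sum>i\<in>UNIV. z i) = (\<Sum>i\<in>UNIV. x i)"
proof -
  define a where "a i = x i - z i" for i
  have "(\<Sum>i\<in>UNIV. (norm (a i - 0))\<^sup>2) \<le> (\<Sum>i\<in>UNIV. (norm (a i - centroid a))\<^sup>2)"
    using assms[of "centroid a"] unfolding sum_sq_dist_def a_def by (simp add: algebra_simps)
  then have "real CARD('n) * (norm (centroid a))\<^sup>2 \<le> 0"
    unfolding sum_power2_norm_diff_centroid[of a 0] by simp
  then have "centroid a = 0"
    by (simp add: mult_le_0_iff)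
  then show ?thesis
    by (simp add: centroid_def a_def sum_subtractf)
qed

text \<open>C carries the coordinate left fixed by the rotation. The right-hand side is minimal at
  t = 0, and its derivative there is -2 times the sum in the conclusion.\<close>

lemma planar_rotation_optimal_torque:
  fixes A B P Q C :: "'n::finite \<Rightarrow> real"
  assumes "\<And>t. (\<Sum>i\<in>UNIV. (A i - P i)\<^sup>2 + (B i - Q i)\<^sup>2 + C i) \<le>
     (\<Sum>i\<in>UNIV. (A i - (cos t * P i - sin t * Q i))\<^sup>2 + (B i - (sin t * P i + cos t * Q i))\<^sup>2 + C i)"
  shows "(\<Sum>i\<in>UNIV. P i * B i - Q i * A i) = 0"
proof -
  define F where "F t = (\<Sum>i\<in>UNIV. (A i - (cos t * P i - sin t * Q i))\<^sup>2
                                   + (B i - (sin t * P i + cos t * Q i))\<^sup>2 + C i)" for t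
  have F': "DERIV F 0 :> (\<Sum>i\<in>UNIV. 2 * (A i - P i) * Q i + 2 * (B i - Q i) * (- P i))"
    unfolding F_def by (auto intro!: derivative_eq_intros sum.cong simp: algebra_simps)
  have "(\<Sum>i\<in>UNIV. 2 * (A i - P i) * Q i + 2 * (B i - Q i) * (- P i)) = 0"
    by (rule DERIV_local_min[OF F', of 1]) (use assms in \<open>auto simp: F_def\<close>)
  then have "2 * (\<Sum>i\<in>UNIV. P i * B i - Q i * A i) = 0"
    by (simp add: sum_distrib_left algebra_simps sum_subtractf sum.distrib)
  then show ?thesis by simp
qed

definition rotation_x :: "real \<Rightarrow> real^3^3" where
  "rotation_x t = vector [vector [1, 0, 0], vector [0, cos t, - sin t], vector [0, sin t, cos t]]"
definition rotation_y :: "real \<Rightarrow> real^3^3" where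
  "rotation_y t = vector [vector [cos t, 0, sin t], vector [0, 1, 0], vector [- sin t, 0, cos t]]"
definition rotation_z :: "real \<Rightarrow> real^3^3" where
  "rotation_z t = vector [vector [cos t, - sin t, 0], vector [sin t, cos t, 0], vector [0, 0, 1]]"

lemmas matrix_3_simps = rotation_matrix_def orthogonal_matrix_def det_3 vec_eq_iff
   matrix_matrix_mult_def transpose_def mat_def forall_3 sum_3

lemma rotation_matrix_rotation_x: "rotation_matrix (rotation_x t)"
  by (simp add: matrix_3_simps rotation_x_def flip: power2_eq_square)
lemma rotation_matrix_rotation_y: "rotation_matrix (rotation_y t)"
  by (simp add: matrix_3_simps rotation_y_def flip: power2_eq_square)
lemma rotation_matrix_rotation_z: "rotation_matrix (rotation_z t)"
  by (simp add: matrix_3_simps rotation_z_def flip: power2_eq_square)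

lemma rotation_x_mult_vec:
  "rotation_x t *v v = vector [v$1, cos t * v$2 - sin t * v$3, sin t * v$2 + cos t * v$3]"
  by (simp add: rotation_x_def matrix_vector_mult_def sum_3 vec_eq_iff forall_3)
lemma rotation_y_mult_vec:
  "rotation_y t *v v = vector [sin t * v$3 + cos t * v$1, v$2, cos t * v$3 - sin t * v$1]"
  by (simp add: rotation_y_def matrix_vector_mult_def sum_3 vec_eq_iff forall_3 algebra_simps)
lemma rotation_z_mult_vec:
  "rotation_z t *v v = vector [cos t * v$1 - sin t * v$2, sin t * v$1 + cos t * v$2, v$3]"
  by (simp add: rotation_z_def matrix_vector_mult_def sum_3 vec_eq_iff forall_3)

lemma power2_norm_vec3: "(norm (v::real^3))\<^sup>2 = (v$1)\<^sup>2 + (v$2)\<^sup>2 + (v$3)\<^sup>2"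
  unfolding power2_norm_eq_inner inner_vec_def sum_3 by (simp add: power2_eq_square)

lemma sum_cross3_eq_0_of_rotation_optimal:
  fixes x z :: "('n::finite) pose"
  assumes opt: "\<And>Q. rotation_matrix Q \<Longrightarrow> sum_sq_dist x z \<le> sum_sq_dist x (\<lambda>i. Q *v z i)"
  shows "(\<Sum>i\<in>UNIV. cross3 (z i) (x i)) = 0"
proof -
  have dev: "sum_sq_dist x w =
      (\<Sum>i\<in>UNIV. (x i$1 - w i$1)\<^sup>2 + (x i$2 - w i$2)\<^sup>2 + (x i$3 - w i$3)\<^sup>2)" for w
    unfolding sum_sq_dist_def by (simp add: power2_norm_vec3)
  have "(\<Sum>i\<in>UNIV. z i$2 * x i$3 - z i$3 * x i$2) = 0"
    using opt[OF rotation_matrix_rotation_x] unfolding dev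
    by (intro planar_rotation_optimal_torque[where C = "\<lambda>i. (x i$1 - z i$1)\<^sup>2"])
      (simp add: rotation_x_mult_vec add_ac)
  moreover have "(\<Sum>i\<in>UNIV. z i$3 * x i$1 - z i$1 * x i$3) = 0"
    using opt[OF rotation_matrix_rotation_y] unfolding dev
    by (intro planar_rotation_optimal_torque[where C = "\<lambda>i. (x i$2 - z i$2)\<^sup>2"])
      (simp add: rotation_y_mult_vec add_ac)
  moreover have "(\<Sum>i\<in>UNIV. z i$1 * x i$2 - z i$2 * x i$1) = 0"
    using opt[OF rotation_matrix_rotation_z] unfolding dev
    by (intro planar_rotation_optimal_torque[where C = "\<lambda>i. (x i$3 - z i$3)\<^sup>2"])
      (simp add: rotation_z_mult_vec)
  ultimately show ?thesis
    by (simp add: vec_eq_iff forall_3 cross3_simps)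
qed

lemma sum_RMSDAlign: "(\<Sum>i\<in>UNIV. RMSDAlign x y i) = (\<Sum>i\<in>UNIV. x i)"
  using RMSDAlign_le_rigid_apply[OF rotation_matrix_id, of x y]
  by (intro sum_eq_of_translation_optimal) (simp add: rigid_apply_def add.commute)

lemma sum_cross3_RMSDAlign: "(\<Sum>i\<in>UNIV. cross3 (RMSDAlign x y i) (x i)) = 0"
  using RMSDAlign_le_rigid_apply[of _ x y 0]
  by (intro sum_cross3_eq_0_of_rotation_optimal) (simp add: rigid_apply_def)

lemma angular_momentum_eq_0_of_conserved:
  fixes x :: "('n::finite) pose" and y :: "real \<Rightarrow> 'n pose"
  assumes sum: "\<And>t. (\<Sum>i\<in>UNIV. y t i) = (\<Sum>i\<in>UNIV. x i)"
    and torque: "\<And>t. (\<Sum>i\<in>UNIV. cross3 (y t i) (x i)) = 0"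
    and diff: "\<And>i. (\<lambda>t. y t i) differentiable (at t0)"
  shows "(\<Sum>i\<in>UNIV. cross3 (x i - c) (vector_derivative (\<lambda>t. y t i) (at t0))) = 0"
proof -
  define D where "D i = vector_derivative (\<lambda>t. y t i) (at t0)" for i
  have D: "((\<lambda>t. y t i) has_vector_derivative D i) (at t0)" for i
    using diff[of i] unfolding D_def vector_derivative_works .
  have "((\<lambda>t. \<Sum>i\<in>UNIV. y t i) has_vector_derivative (\<Sum>i\<in>UNIV. D i)) (at t0)"
    by (intro has_vector_derivative_sum D)
  moreover have "((\<lambda>t. \<Sum>i\<in>UNIV. y t i) has_vector_derivative 0) (at t0)"
    unfolding sum by simp
  ultimately have sum_D: "(\<Sum>i\<in>UNIV. D i) = 0"
    by (rule vector_derivative_unique_at)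
  have cross3_left: "bounded_linear (\<lambda>v. cross3 v w)" for w
    using bilinear_cross bilinear_conv_bounded_bilinear bounded_bilinear.bounded_linear_left
    by blast
  have "((\<lambda>t. \<Sum>i\<in>UNIV. cross3 (y t i) (x i))
      has_vector_derivative (\<Sum>i\<in>UNIV. cross3 (D i) (x i))) (at t0)"
    by (intro has_vector_derivative_sum bounded_linear.has_vector_derivative[OF cross3_left] D)
  moreover have "((\<lambda>t. \<Sum>i\<in>UNIV. cross3 (y t i) (x i)) has_vector_derivative 0) (at t0)"
    unfolding torque by simp
  ultimately have torque_D: "(\<Sum>i\<in>UNIV. cross3 (D i) (x i)) = 0"
    by (rule vector_derivative_unique_at)
  have "linear (cross3 c)" using bilinear_cross by (simp add: bilinear_def)
  then have "(\<Sum>i\<in>UNIV. cross3 (x i - c) (D i))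
      = (\<Sum>i\<in>UNIV. cross3 (x i) (D i)) - cross3 c (\<Sum>i\<in>UNIV. D i)"
    by (simp add: bilinear_lsub[OF bilinear_cross] sum_subtractf linear_sum)
  also have "\<dots> = - (\<Sum>i\<in>UNIV. cross3 (D i) (x i))"
    using sum_D by (simp add: cross_skew[of "x _"] sum_negf)
  finally show ?thesis
    using torque_D by (simp add: D_def)
qed

theorem proposition1:
  fixes bonds :: "('n::finite \<times> 'n \<times> 'n set) list"
    and \<theta> :: "nat \<Rightarrow> real"
    and x :: "'n pose"
    and R :: "real \<Rightarrow> real^3^3" and p :: "real \<Rightarrow> real^3"
  defines "xt \<equiv> (\<lambda>t. A_tor bonds (\<lambda>k. t * \<theta> k) x)"
  assumes noncol: "\<not> collinear (range x)"
    and x0: "xt 0 = x"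
    and diff: "\<And>i. (\<lambda>t. xt t i) differentiable (at 0)"
    and align: "\<And>t. rotation_matrix (R t) \<and>
                     xt t = rigid_apply (R t) (p t) (torsion_comp bonds (\<lambda>k. t * \<theta> k) x)"
    and Rdiff: "R differentiable (at 0)"
    and pdiff: "p differentiable (at 0)"
  shows "((\<lambda>t. centroid (xt t)) has_vector_derivative 0) (at 0)
       \<and> (\<Sum>i\<in>UNIV. cross3 (x i - centroid x) (vector_derivative (\<lambda>t. xt t i) (at 0))) = 0"
proof
  have sum: "(\<Sum>i\<in>UNIV. xt t i) = (\<Sum>i\<in>UNIV. x i)" for t
    unfolding xt_def A_tor_def by (rule sum_RMSDAlign)
  then have "(\<lambda>t. centroid (xt t)) = (\<lambda>t. centroid x)"
    by (simp add: centroid_def)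
  then show "((\<lambda>t. centroid (xt t)) has_vector_derivative 0) (at 0)"
    by simp
  have torque: "(\<Sum>i\<in>UNIV. cross3 (xt t i) (x i)) = 0" for t
    unfolding xt_def A_tor_def by (rule sum_cross3_RMSDAlign)
  show "(\<Sum>i\<in>UNIV. cross3 (x i - centroid x) (vector_derivative (\<lambda>t. xt t i) (at 0))) = 0"
    using sum torque diff by (rule angular_momentum_eq_0_of_conserved)
qed

end
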